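(* For all integers $n\ge 2$ and $d\ge 1$, $$\left(\frac{(n-1)n^{n-2}}{2}\right)^d\le N(n,d)\le \binom{n}{2}^{nd}.$$
   Context: A (general) pedigree $\mathcal{T}(X_0)$ on a set $X_0$ is a finite directed graph on a vertex set $V$ such that: every vertex has out-degree $0$ or $2$; $X_0\subseteq V$ and every vertex of $X_0$ has in-degree $0$; there are no isolated vertices; vertices of $X_0$ are extant. A discrete generation pedigree of depth $d$ on $X_0$ has vertex set $V=\bigcup_{i=0}^d X_i$ with the $X_i$ disjoint, $X_d$ the set of vertices of out-degree $0$, and every vertex of $X_i$ ($i<d$) having its two out-arcs (to its two parents) in $X_{i+1}$. $N(n,d)$ denotes the number of discrete generation pedigrees of depth $d$ with $|X_i|=n$ for all $0\le i\le d$, on a fixed labelled extant set $X_0$, counted up to isomorphisms (arc-preserving bijections) that fix every vertex of $X_0$; all other vertices are unlabelled. *)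

theory Defs
  imports Complex_Main
begin

text \<open>Concrete vertex set for a discrete generation pedigree of depth d with n vertices
  per generation: vertex (i,j) is the j-th vertex of generation X_i. Generation X_0 =
  {(0,j). j < n} is the fixed labelled extant set; the labels of the other vertices are
  irrelevant because we count isomorphism classes (isomorphisms fix X_0 pointwise).
  Arcs point from a child to its parents.\<close>

definition pedV :: "nat \<Rightarrow> nat \<Rightarrow> (nat \<times> nat) set" where
  "pedV n d = {(i, j). i \<le> d \<and> j < n}"

definition dgp :: "nat \<Rightarrow> nat \<Rightarrow> ((nat \<times> nat) \<times> (nat \<times> nat)) set \<Rightarrow> bool" where
  "dgp n d E \<longleftrightarrow>
     E \<subseteq> pedV n d \<times> pedV n d \<and>
     (\<forall>(u, v) \<in> E. fst v = Suc (fst u)) \<and>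
     (\<forall>u \<in> pedV n d. fst u < d \<longrightarrow> card {v. (u, v) \<in> E} = 2) \<and>
     (\<forall>u \<in> pedV n d. \<exists>v. (u, v) \<in> E \<or> (v, u) \<in> E)"

definition ped_iso :: "nat \<Rightarrow> nat \<Rightarrow> ((nat \<times> nat) \<times> (nat \<times> nat)) set
    \<Rightarrow> ((nat \<times> nat) \<times> (nat \<times> nat)) set \<Rightarrow> bool" where
  "ped_iso n d E E' \<longleftrightarrow>
     (\<exists>f. bij_betw f (pedV n d) (pedV n d) \<and>
          (\<forall>j < n. f (0, j) = (0, j)) \<and>
          (\<forall>u \<in> pedV n d. \<forall>v \<in> pedV n d. (u, v) \<in> E \<longleftrightarrow> (f u, f v) \<in> E'))"

definition ped_iso_rel :: "nat \<Rightarrow> nat \<Rightarrow>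
    (((nat \<times> nat) \<times> (nat \<times> nat)) set \<times> ((nat \<times> nat) \<times> (nat \<times> nat)) set) set" where
  "ped_iso_rel n d = {(E, E'). dgp n d E \<and> dgp n d E' \<and> ped_iso n d E E'}"

definition N :: "nat \<Rightarrow> nat \<Rightarrow> nat" where
  "N n d = card ({E. dgp n d E} // ped_iso_rel n d)"

end

theory Submission
  imports Defs "HOL-Library.FuncSet"
begin

text \<open>A discrete generation pedigree is determined by the 2-set of parents of each of the
  n d non-maximal vertices, which gives the upper bound.

  For the lower bound, let child u of one generation have parents u and g u in the next,
  where g is a spanning tree of the next generation rooted at r, extended by one edge
  from r: by Cayley there are (n - 1) n^(n - 2) such unicyclic assignments. Two of them
  that differ by a relabelling of the parents determine their relabelling uniquely (the
  moved vertices form the cycle through r), so each relabelling class has at most two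
  members; for n \<ge> 3 a class representative has no nontrivial symmetry. Stacking d
  representatives gives pedigrees on which every isomorphism is the identity, generation
  by generation, so distinct stacks give distinct isomorphism classes.\<close>

section \<open>Rooted forests\<close>

text \<open>A forest on V with root set R: every non-root x points to its parent a x; the
  height function h witnesses that following parents always ends in R.\<close>
definition forest :: "'a set \<Rightarrow> 'a set \<Rightarrow> ('a \<Rightarrow> 'a) set" where
  "forest V R = {a \<in> (V - R) \<rightarrow>\<^sub>E V. \<exists>h::'a \<Rightarrow> nat. \<forall>x \<in> V - R. h (a x) < h x}"

lemma forestD:
  assumes "a \<in> forest V R" "x \<in> V - R"
  shows "a x \<in> V" "a x \<noteq> x"
proof -
  obtain h :: "'a \<Rightarrow> nat" where "h (a x) < h x"
    using assms unfolding forest_def by blast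
  then show "a x \<noteq> x" by auto
  show "a x \<in> V" using assms unfolding forest_def by auto
qed

lemma forest_closed_subset_empty:
  assumes "a \<in> forest V R" "D \<subseteq> V - R" "a ` D \<subseteq> D"
  shows "D = {}"
proof (rule ccontr)
  assume "D \<noteq> {}"
  then obtain y where "y \<in> D" by blast
  obtain h :: "'a \<Rightarrow> nat" where h: "\<forall>x \<in> V - R. h (a x) < h x"
    using assms(1) unfolding forest_def by blast
  obtain x where x: "x \<in> D" "\<forall>z. z \<in> D \<longrightarrow> h x \<le> h z"
    using ex_has_least_nat[of "\<lambda>x. x \<in> D" y h] \<open>y \<in> D\<close> by blast
  have "h x \<le> h (a x)" using x assms(3) by blast
  moreover have "h (a x) < h x" using h x(1) assms(2) by blast
  ultimately show False by simp
qed

lemma forest_covered_subset_empty: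
  assumes "a \<in> forest V R" "finite D" "D \<subseteq> V - R" "D \<subseteq> a ` D"
  shows "D = {}"
proof (rule ccontr)
  assume "D \<noteq> {}"
  obtain h :: "'a \<Rightarrow> nat" where h: "\<forall>x \<in> V - R. h (a x) < h x"
    using assms(1) unfolding forest_def by blast
  have "Max (h ` D) \<in> h ` D" using assms(2) \<open>D \<noteq> {}\<close> by simp
  then obtain x where x: "x \<in> D" "h x = Max (h ` D)" by auto
  then obtain y where y: "y \<in> D" "x = a y" using assms(4) by blast
  then have "h y \<le> h x" using x(2) assms(2) by simp
  moreover have "h x < h y" using h y assms(3) by blast
  ultimately show False by simp
qed

lemma finite_forest: "finite V \<Longrightarrow> finite (forest V R)"
  by (rule finite_subset[of _ "(V - R) \<rightarrow>\<^sub>E V"]) (auto simp: forest_def intro: finite_PiE)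

lemma forest_no_roots:
  assumes "V \<noteq> {}"
  shows "forest V {} = {}"
  using forest_closed_subset_empty[of _ V "{}" V] forestD[of _ V "{}"] assms by blast

lemma forest_all_roots: "forest V V = {\<lambda>x. undefined}"
  unfolding forest_def by auto

lemma forest_glue:
  assumes "R \<subseteq> V" "S \<subseteq> V - R" "b \<in> S \<rightarrow>\<^sub>E R" "c \<in> forest (V - R) S"
  shows "(\<lambda>x. if x \<in> S then b x else c x) \<in> forest V R"
proof -
  obtain h :: "_ \<Rightarrow> nat" where h: "\<forall>x \<in> V - R - S. h (c x) < h x"
    using assms(4) unfolding forest_def by blast
  let ?h = "\<lambda>x. if x \<in> R then 0 else Suc (h x)"
  have "\<forall>x \<in> V - R. ?h (if x \<in> S then b x else c x) < ?h x"
    using assms(3) h forestD[OF assms(4)] by auto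
  moreover have "(\<lambda>x. if x \<in> S then b x else c x) \<in> (V - R) \<rightarrow>\<^sub>E V"
    using assms by (auto simp: forest_def PiE_def extensional_def Pi_def)
  ultimately show ?thesis
    unfolding forest_def by (intro CollectI conjI exI[of _ ?h])
qed

lemma bij_betw_forest_first_layer:
  assumes "R \<subseteq> V"
  defines "layer \<equiv> \<lambda>a. {x \<in> V - R. a x \<in> R}"
  shows "bij_betw (\<lambda>a. (layer a, restrict a (layer a), restrict a (V - R - layer a)))
           (forest V R) (SIGMA S:Pow (V - R). (S \<rightarrow>\<^sub>E R) \<times> forest (V - R) S)"
proof (rule bij_betw_byWitness[where f' = "\<lambda>(S, b, c) x. if x \<in> S then b x else c x"])
  show "\<forall>a\<in>forest V R. (\<lambda>(S, b, c) x. if x \<in> S then b x else c x)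
          (layer a, restrict a (layer a), restrict a (V - R - layer a)) = a"
    by (auto simp: forest_def layer_def fun_eq_iff PiE_def extensional_def)
  have "layer (\<lambda>x. if x \<in> S then b x else c x) = S \<and>
        restrict (\<lambda>x. if x \<in> S then b x else c x) S = b \<and>
        restrict (\<lambda>x. if x \<in> S then b x else c x) (V - R - S) = c"
    if S: "S \<subseteq> V - R" and b: "b \<in> S \<rightarrow>\<^sub>E R" and c: "c \<in> forest (V - R) S" for S b c
  proof (intro conjI)
    show "layer (\<lambda>x. if x \<in> S then b x else c x) = S"
      using S b forestD(1)[OF c] by (auto simp: layer_def)
    show "restrict (\<lambda>x. if x \<in> S then b x else c x) S = b"
      using b by (auto simp: fun_eq_iff PiE_def extensional_def)
    show "restrict (\<lambda>x. if x \<in> S then b x else c x) (V - R - S) = c"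
      using c by (auto simp: forest_def fun_eq_iff PiE_def extensional_def)
  qed
  then show "\<forall>p\<in>SIGMA S:Pow (V - R). (S \<rightarrow>\<^sub>E R) \<times> forest (V - R) S.
          (\<lambda>a. (layer a, restrict a (layer a), restrict a (V - R - layer a)))
            ((\<lambda>(S, b, c) x. if x \<in> S then b x else c x) p) = p"
    by auto
  have "restrict a (V - R - layer a) \<in> forest (V - R) (layer a)" if a: "a \<in> forest V R" for a
  proof -
    obtain h :: "'a \<Rightarrow> nat" where "\<forall>x \<in> V - R. h (a x) < h x"
      using a unfolding forest_def by blast
    then show ?thesis using forestD(1)[OF a] unfolding forest_def layer_def by auto
  qed
  moreover have "layer a \<in> Pow (V - R)" "restrict a (layer a) \<in> layer a \<rightarrow>\<^sub>E R" for a
    by (auto simp: layer_def)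
  ultimately show "(\<lambda>a. (layer a, restrict a (layer a), restrict a (V - R - layer a))) ` forest V R
          \<subseteq> (SIGMA S:Pow (V - R). (S \<rightarrow>\<^sub>E R) \<times> forest (V - R) S)"
    by blast
  show "(\<lambda>(S, b, c) x. if x \<in> S then b x else c x) ` (SIGMA S:Pow (V - R). (S \<rightarrow>\<^sub>E R) \<times> forest (V - R) S)
          \<subseteq> forest V R"
    using forest_glue[OF assms(1)] by auto
qed

lemma card_forest_first_layer:
  assumes "finite V" "R \<subseteq> V"
  shows "card (forest V R) = (\<Sum>S\<in>Pow (V - R). card R ^ card S * card (forest (V - R) S))"
proof -
  have fin: "finite R" "finite (V - R)" using assms finite_subset by auto
  have "card (forest V R) = card (SIGMA S:Pow (V - R). (S \<rightarrow>\<^sub>E R) \<times> forest (V - R) S)"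
    using bij_betw_same_card[OF bij_betw_forest_first_layer[OF assms(2)]] .
  also have "\<dots> = (\<Sum>S\<in>Pow (V - R). card ((S \<rightarrow>\<^sub>E R) \<times> forest (V - R) S))"
    using fin by (intro card_SigmaI) (auto intro!: finite_PiE finite_forest dest: finite_subset)
  also have "\<dots> = (\<Sum>S\<in>Pow (V - R). card R ^ card S * card (forest (V - R) S))"
    using fin by (intro sum.cong) (auto simp: card_cartesian_product card_PiE dest: finite_subset)
  finally show ?thesis .
qed

lemma sum_Pow_card:
  assumes "finite W"
  shows "(\<Sum>S\<in>Pow W. g (card S)) = (\<Sum>s\<le>card W. (card W choose s) * (g s :: nat))"
proof -
  have "(\<Sum>S\<in>Pow W. g (card S)) = (\<Sum>s\<le>card W. \<Sum>S\<in>{S \<in> Pow W. card S = s}. g (card S))"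
    by (rule sum.group[symmetric]) (use assms in \<open>auto intro: card_mono\<close>)
  also have "\<dots> = (\<Sum>s\<le>card W. (card W choose s) * g s)"
    using n_subsets[OF assms] by (intro sum.cong) (simp_all add: Pow_def)
  finally show ?thesis .
qed

text \<open>k times the derivative in k of the binomial expansion of (k + m)^m.\<close>
lemma sum_choose_weighted_power:
  "(\<Sum>s\<le>m. (m choose s) * (k ^ s * (s * m ^ (m - s)))) = m * k * ((k + m) ^ (m - 1) :: nat)"
proof (cases m)
  case (Suc l)
  have "(\<Sum>s\<le>Suc l. (Suc l choose s) * (k ^ s * (s * Suc l ^ (Suc l - s))))
      = (\<Sum>t\<le>l. (Suc l choose Suc t) * (k ^ Suc t * (Suc t * Suc l ^ (l - t))))"
    by (subst sum.atMost_Suc_shift) simp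
  also have "\<dots> = (\<Sum>t\<le>l. Suc l * k * ((l choose t) * k ^ t * Suc l ^ (l - t)))"
  proof (rule sum.cong[OF refl])
    fix t
    have "(Suc l choose Suc t) * (k ^ Suc t * (Suc t * Suc l ^ (l - t)))
        = (Suc t * (Suc l choose Suc t)) * (k * k ^ t * Suc l ^ (l - t))"
      by (simp only: power_Suc mult_ac)
    then show "(Suc l choose Suc t) * (k ^ Suc t * (Suc t * Suc l ^ (l - t)))
        = Suc l * k * ((l choose t) * k ^ t * Suc l ^ (l - t))"
      by (simp only: Suc_times_binomial mult_ac)
  qed
  also have "\<dots> = Suc l * k * (\<Sum>t\<le>l. (l choose t) * k ^ t * Suc l ^ (l - t))"
    by (simp only: sum_distrib_left)
  also have "\<dots> = Suc l * k * (k + Suc l) ^ l"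
    using binomial_ring[of k "Suc l" l] by simp
  finally show ?thesis using Suc by simp
qed simp

text \<open>The generalised Cayley formula k (k + m)^(m - 1) for forests on k + m vertices with
  k given roots, multiplied by k + m so that it also holds for m = 0.\<close>
theorem card_forest:
  assumes "finite V" "R \<subseteq> V"
  shows "card (forest V R) * card V = card R * card V ^ (card V - card R)"
  using assms
proof (induction "card V" arbitrary: V R rule: less_induct)
  case less
  consider "V = R" | "V \<noteq> R" "R = {}" | "R \<noteq> {}" "V \<noteq> R" by blast
  then show ?case
  proof cases
    case 1
    then show ?thesis by (simp add: forest_all_roots)
  next
    case 2
    then show ?thesis using forest_no_roots[of V] by auto
  next
    case 3
    define m where "m = card (V - R)"
    define k where "k = card R"
    have fin: "finite (V - R)" "finite R" using less.prems finite_subset by auto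
    have cV: "card V = m + k"
      using card_Diff_subset[OF fin(2) less.prems(2)] card_mono[OF less.prems] by (simp add: m_def k_def)
    have "m > 0" "k > 0" using 3 less.prems fin by (auto simp: m_def k_def card_gt_0_iff)
    have IH: "card (forest (V - R) S) * m = card S * m ^ (m - card S)" if "S \<subseteq> V - R" for S
      using less.hyps[of "V - R" S] that fin \<open>k > 0\<close> cV by (simp add: m_def)
    have "card (forest V R) * m = (\<Sum>S\<in>Pow (V - R). k ^ card S * (card (forest (V - R) S) * m))"
      by (simp add: card_forest_first_layer[OF less.prems] sum_distrib_right k_def mult.assoc)
    also have "\<dots> = (\<Sum>S\<in>Pow (V - R). k ^ card S * (card S * m ^ (m - card S)))"
      using IH by (intro sum.cong) auto
    also have "\<dots> = m * k * (k + m) ^ (m - 1)"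
      using sum_Pow_card[OF fin(1), of "\<lambda>s. k ^ s * (s * m ^ (m - s))"]
      by (simp add: m_def sum_choose_weighted_power)
    finally have "card (forest V R) = k * (k + m) ^ (m - 1)"
      using \<open>m > 0\<close> by (simp add: mult.commute mult.left_commute)
    moreover obtain l where "m = Suc l" using \<open>m > 0\<close> gr0_implies_Suc by blast
    ultimately show ?thesis by (simp add: cV k_def add.commute mult_ac)
  qed
qed

corollary card_forest_single_root:
  assumes "finite V" "r \<in> V" "card V \<ge> 2"
  shows "card (forest V {r}) = card V ^ (card V - 2)"
proof -
  obtain j where j: "card V = Suc (Suc j)" using assms(3) by (metis add_2_eq_Suc le_Suc_ex)
  then have "card (forest V {r}) * card V = card V ^ (card V - 2) * card V"
    using card_forest[of V "{r}"] assms(1,2) by simp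
  then show ?thesis using j by (subst (asm) mult_cancel2) simp
qed

lemma card_le_mult_card_quotient:
  assumes "equiv A r" "\<forall>x\<in>A. card (r `` {x}) \<le> k"
  shows "card A \<le> k * card (A // r)"
proof -
  have "card A = card (\<Union>(A // r))" using Union_quotient[OF assms(1)] by simp
  also have "\<dots> \<le> (\<Sum>C\<in>A // r. card C)" by (rule card_Union_le_sum_card)
  also have "\<dots> \<le> (\<Sum>C\<in>A // r. k)" by (rule sum_mono) (auto elim!: quotientE simp: assms(2))
  also have "\<dots> = k * card (A // r)" by simp
  finally show ?thesis .
qed

definition class_reps :: "'a set \<Rightarrow> ('a \<times> 'a) set \<Rightarrow> 'a set" where
  "class_reps A r = (\<lambda>C. SOME x. x \<in> C) ` (A // r)"

lemma some_in_class: "equiv A r \<Longrightarrow> C \<in> A // r \<Longrightarrow> (SOME x. x \<in> C) \<in> C"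
  using in_quotient_imp_non_empty some_in_eq by blast

lemma class_reps_subset: "equiv A r \<Longrightarrow> class_reps A r \<subseteq> A"
  unfolding class_reps_def using some_in_class in_quotient_imp_subset by blast

lemma card_class_reps:
  assumes "equiv A r"
  shows "card (class_reps A r) = card (A // r)"
  unfolding class_reps_def
proof (rule card_image, rule inj_onI)
  fix C C' assume C: "C \<in> A // r" "C' \<in> A // r" and eq: "(SOME x. x \<in> C) = (SOME x. x \<in> C')"
  have "C \<inter> C' \<noteq> {}" using some_in_class[OF assms C(1)] some_in_class[OF assms C(2)] eq by auto
  then show "C = C'" using quotient_disj[OF assms C] by blast
qed

lemma class_reps_unique:
  assumes "equiv A r" "x \<in> class_reps A r" "y \<in> class_reps A r" "(x, y) \<in> r"
  shows "x = y"
proof -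
  obtain C C' where C: "C \<in> A // r" "C' \<in> A // r"
    and xy: "x = (SOME x. x \<in> C)" "y = (SOME x. x \<in> C')"
    using assms(2,3) unfolding class_reps_def by blast
  have "C = C'"
    using quotient_eqI[OF assms(1) C, of x y] some_in_class[OF assms(1) C(1)]
      some_in_class[OF assms(1) C(2)] xy assms(4) by simp
  then show ?thesis using xy by simp
qed

section \<open>Unicyclic parent assignments\<close>

text \<open>A unicyclic parent assignment on V: child u has the parents u and second_parent u
  in the next generation. Joining u to its second parent gives the spanning tree a with
  root r plus the edge from r to b, a connected graph with exactly one cycle.\<close>
definition second_parent :: "'a \<Rightarrow> ('a \<Rightarrow> 'a) \<times> 'a \<Rightarrow> 'a \<Rightarrow> 'a" where
  "second_parent r ab u = (if u = r then snd ab else fst ab u)"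

definition unicyclic_assignment :: "'a set \<Rightarrow> 'a \<Rightarrow> ('a \<Rightarrow> 'a) \<times> 'a \<Rightarrow> 'a \<Rightarrow> 'a set" where
  "unicyclic_assignment V r ab = (\<lambda>u\<in>V. {u, second_parent r ab u})"

definition unicyclic_assignments :: "'a set \<Rightarrow> 'a \<Rightarrow> ('a \<Rightarrow> 'a set) set" where
  "unicyclic_assignments V r = unicyclic_assignment V r ` (forest V {r} \<times> (V - {r}))"

lemma second_parent_in:
  assumes "a \<in> forest V {r}" "b \<in> V" "u \<in> V"
  shows "second_parent r (a, b) u \<in> V"
  using assms forestD(1)[of a V "{r}" u] by (simp add: second_parent_def)

lemma second_parent_neq:
  assumes "a \<in> forest V {r}" "b \<in> V - {r}" "u \<in> V"
  shows "second_parent r (a, b) u \<noteq> u"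
  using assms forestD(2)[of a V "{r}" u] by (auto simp: second_parent_def)

lemma unicyclic_assignmentsE:
  assumes "P \<in> unicyclic_assignments V r"
  obtains a b where "a \<in> forest V {r}" "b \<in> V - {r}" "P = unicyclic_assignment V r (a, b)"
  using assms unfolding unicyclic_assignments_def by auto

lemma unicyclic_assignmentsD:
  assumes "P \<in> unicyclic_assignments V r" "u \<in> V"
  shows "P u \<subseteq> V" "card (P u) = 2" "u \<in> P u"
proof -
  obtain a b where ab: "a \<in> forest V {r}" "b \<in> V - {r}" "P = unicyclic_assignment V r (a, b)"
    using assms(1) by (rule unicyclic_assignmentsE)
  then have "P u = {u, second_parent r (a, b) u}" using assms(2) by (simp add: unicyclic_assignment_def)
  then show "P u \<subseteq> V" "card (P u) = 2" "u \<in> P u"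
    using assms(2) second_parent_in[OF ab(1) _ assms(2)] second_parent_neq[OF ab(1,2) assms(2)] ab(2)
    by auto
qed

lemma unicyclic_assignments_extensional: "P \<in> unicyclic_assignments V r \<Longrightarrow> P \<in> extensional V"
  by (auto elim!: unicyclic_assignmentsE simp: unicyclic_assignment_def)

lemma finite_unicyclic_assignments: "finite V \<Longrightarrow> finite (unicyclic_assignments V r)"
  unfolding unicyclic_assignments_def by (intro finite_imageI finite_cartesian_product finite_forest) auto

lemma inj_on_unicyclic_assignment:
  assumes "r \<in> V"
  shows "inj_on (unicyclic_assignment V r) (forest V {r} \<times> (V - {r}))"
proof (rule inj_onI)
  fix x y
  assume x: "x \<in> forest V {r} \<times> (V - {r})" and y: "y \<in> forest V {r} \<times> (V - {r})"
    and xy: "unicyclic_assignment V r x = unicyclic_assignment V r y"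
  obtain a b a' b' where xe: "x = (a, b)" and ye: "y = (a', b')" by fastforce
  have ab: "a \<in> forest V {r}" "b \<in> V - {r}" and ab': "a' \<in> forest V {r}" "b' \<in> V - {r}"
    using x y xe ye by auto
  have eq: "unicyclic_assignment V r (a, b) = unicyclic_assignment V r (a', b')" using xy xe ye by simp
  have "{u, second_parent r (a, b) u} = {u, second_parent r (a', b') u}" if "u \<in> V" for u
    using fun_cong[OF eq, of u] that by (simp add: unicyclic_assignment_def)
  then have sp: "second_parent r (a, b) u = second_parent r (a', b') u" if "u \<in> V" for u
    using that second_parent_neq[OF ab] second_parent_neq[OF ab'] by (auto simp: doubleton_eq_iff)
  have "a = a'"
  proof (rule extensionalityI)
    show "a \<in> extensional (V - {r})" "a' \<in> extensional (V - {r})"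
      using ab(1) ab'(1) by (auto simp: forest_def PiE_def)
    show "a u = a' u" if "u \<in> V - {r}" for u
      using sp[of u] that by (simp add: second_parent_def)
  qed
  moreover have "b = b'" using sp[OF assms] ab(2) by (simp add: second_parent_def)
  ultimately show "x = y" using xe ye by simp
qed

lemma card_unicyclic_assignments:
  assumes "finite V" "r \<in> V" "card V \<ge> 2"
  shows "card (unicyclic_assignments V r) = card V ^ (card V - 2) * (card V - 1)"
  unfolding unicyclic_assignments_def
  using card_image[OF inj_on_unicyclic_assignment[OF assms(2)]] card_forest_single_root[OF assms] assms
  by (simp add: card_cartesian_product)

text \<open>Relabelling renames the parent generation only: the children are already fixed by
  an isomorphism that has been shown to be the identity on earlier generations.\<close>
definition relabelled :: "'a set \<Rightarrow> ('a \<Rightarrow> 'a set) \<Rightarrow> ('a \<Rightarrow> 'a set) \<Rightarrow> bool" where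
  "relabelled V P Q \<longleftrightarrow> (\<exists>\<sigma>. bij_betw \<sigma> V V \<and> (\<forall>u\<in>V. Q u = \<sigma> ` P u))"

definition relabel_rel :: "'a set \<Rightarrow> ('a \<Rightarrow> 'a set) set \<Rightarrow> (('a \<Rightarrow> 'a set) \<times> ('a \<Rightarrow> 'a set)) set" where
  "relabel_rel V L = {(P, Q) \<in> L \<times> L. relabelled V P Q}"

lemma equiv_relabel_rel:
  assumes "\<forall>P\<in>L. \<forall>u\<in>V. P u \<subseteq> V"
  shows "equiv L (relabel_rel V L)"
proof (rule equivI)
  show "relabel_rel V L \<subseteq> L \<times> L" by (auto simp: relabel_rel_def)
  show "refl_on L (relabel_rel V L)"
    by (auto intro!: refl_onI exI[of _ id] simp: relabel_rel_def relabelled_def)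
  show "sym (relabel_rel V L)"
  proof (rule symI)
    fix P Q assume "(P, Q) \<in> relabel_rel V L"
    then obtain \<sigma> where PQ: "P \<in> L" "Q \<in> L" "bij_betw \<sigma> V V" "\<forall>u\<in>V. Q u = \<sigma> ` P u"
      by (auto simp: relabel_rel_def relabelled_def)
    have "P u = inv_into V \<sigma> ` Q u" if "u \<in> V" for u
      using PQ that assms inv_into_image_cancel[OF bij_betw_imp_inj_on[OF PQ(3)]] by simp
    then show "(Q, P) \<in> relabel_rel V L"
      using PQ bij_betw_inv_into[OF PQ(3)]
      by (auto simp: relabel_rel_def relabelled_def intro!: exI[of _ "inv_into V \<sigma>"])
  qed
  show "trans (relabel_rel V L)"
  proof (rule transI)
    fix P Q R assume "(P, Q) \<in> relabel_rel V L" "(Q, R) \<in> relabel_rel V L"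
    then obtain \<sigma> \<tau> where "P \<in> L" "R \<in> L" "bij_betw \<sigma> V V" "bij_betw \<tau> V V"
      "\<forall>u\<in>V. Q u = \<sigma> ` P u" "\<forall>u\<in>V. R u = \<tau> ` Q u"
      by (auto simp: relabel_rel_def relabelled_def)
    then show "(P, R) \<in> relabel_rel V L"
      unfolding relabel_rel_def relabelled_def
      by (auto intro!: exI[of _ "\<tau> \<circ> \<sigma>"] bij_betw_trans simp: image_comp)
  qed
qed

lemma equiv_relabel_unicyclic_assignments:
  "equiv (unicyclic_assignments V r) (relabel_rel V (unicyclic_assignments V r))"
  by (rule equiv_relabel_rel) (simp add: unicyclic_assignmentsD(1))

text \<open>The hypothesis on \<sigma> holds whenever \<sigma> relabels one unicyclic assignment into
  another, as both contain u among the parents of u.\<close>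
lemma moved_points_cycle:
  assumes "finite V" "bij_betw \<sigma> V V" "g ` V \<subseteq> V" "\<forall>u\<in>V. u \<in> \<sigma> ` {u, g u}"
  defines "M \<equiv> {v \<in> V. \<sigma> v \<noteq> v}"
  shows "g ` M = M" "inj_on g M" "\<forall>u\<in>M. \<sigma> u \<in> M \<and> g (\<sigma> u) = u"
proof -
  have inj: "inj_on \<sigma> V" using assms(2) by (rule bij_betw_imp_inj_on)
  have \<sigma>V: "\<sigma> u \<in> V" if "u \<in> V" for u by (rule bij_betw_apply[OF assms(2) that])
  have inverse: "\<sigma> (g u) = u" if "u \<in> M" for u using assms(4) that by (auto simp: M_def)
  have gM: "g u \<in> M" if "u \<in> M" for u
    using inverse[OF that] that assms(3) by (auto simp: M_def)
  show \<sigma>M: "\<forall>u\<in>M. \<sigma> u \<in> M \<and> g (\<sigma> u) = u"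
  proof
    fix u assume u: "u \<in> M"
    then have "\<sigma> u \<in> M" using inj \<sigma>V by (auto simp: M_def dest: inj_onD)
    moreover have "g (\<sigma> u) = u"
      using inverse[OF \<open>\<sigma> u \<in> M\<close>] gM[OF \<open>\<sigma> u \<in> M\<close>] u inj by (auto simp: M_def dest: inj_onD)
    ultimately show "\<sigma> u \<in> M \<and> g (\<sigma> u) = u" ..
  qed
  show "g ` M = M" using gM \<sigma>M by force
  then show "inj_on g M" using assms(1) by (intro finite_surj_inj) (auto simp: M_def)
qed

lemma forest_invariant_sets_eq:
  assumes "finite V" "a \<in> forest V {r}" "\<forall>u\<in>V - {r}. g u = a u"
    and "M\<^sub>1 \<subseteq> V" "M\<^sub>2 \<subseteq> V" "g ` M\<^sub>1 = M\<^sub>1" "g ` M\<^sub>2 = M\<^sub>2" "r \<in> M\<^sub>1 \<longleftrightarrow> r \<in> M\<^sub>2"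
  shows "M\<^sub>1 = M\<^sub>2"
proof -
  have sub: "M \<subseteq> M'" if M: "M \<subseteq> V" "g ` M = M" and M': "g ` M' = M'" and r: "r \<in> M \<longleftrightarrow> r \<in> M'"
    for M M'
  proof -
    have "M - M' \<subseteq> a ` (M - M')"
    proof
      fix x assume x: "x \<in> M - M'"
      then obtain y where y: "y \<in> M" "x = g y" using M(2) by blast
      then have "y \<notin> M'" using x M' by blast
      then have "y \<noteq> r" using y(1) r by blast
      then show "x \<in> a ` (M - M')" using y M(1) assms(3) \<open>y \<notin> M'\<close> by auto
    qed
    moreover have "M - M' \<subseteq> V - {r}" using M(1) r by blast
    ultimately have "M - M' = {}"
      using forest_covered_subset_empty[OF assms(2)] finite_subset[OF M(1) assms(1)] by blast
    then show ?thesis by blast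
  qed
  show ?thesis
    using sub[OF assms(4,6,7,8)] sub[OF assms(5,7,6) assms(8)[symmetric]] by (rule subset_antisym)
qed

lemma unicyclic_relabellings_agree:
  assumes "finite V" "a \<in> forest V {r}" "b \<in> V"
    and \<sigma>: "bij_betw \<sigma> V V" "\<forall>u\<in>V. u \<in> \<sigma> ` {u, second_parent r (a, b) u}"
    and \<tau>: "bij_betw \<tau> V V" "\<forall>u\<in>V. u \<in> \<tau> ` {u, second_parent r (a, b) u}"
    and "\<sigma> r = r \<longleftrightarrow> \<tau> r = r"
  shows "\<forall>v\<in>V. \<sigma> v = \<tau> v"
proof
  fix v assume v: "v \<in> V"
  let ?g = "second_parent r (a, b)"
  have gV: "?g ` V \<subseteq> V" using second_parent_in[OF assms(2,3)] by blast
  note cyc\<sigma> = moved_points_cycle[OF assms(1) \<sigma>(1) gV \<sigma>(2)]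
    and cyc\<tau> = moved_points_cycle[OF assms(1) \<tau>(1) gV \<tau>(2)]
  define M where "M = {v \<in> V. \<sigma> v \<noteq> v}"
  have M: "M = {v \<in> V. \<tau> v \<noteq> v}"
    unfolding M_def
    by (rule forest_invariant_sets_eq[OF assms(1,2), where g = ?g])
      (use assms(8) cyc\<sigma>(1) cyc\<tau>(1) in \<open>auto simp: second_parent_def\<close>)
  show "\<sigma> v = \<tau> v"
  proof (cases "v \<in> M")
    case True
    then have "\<sigma> v \<in> M" "\<tau> v \<in> M" "?g (\<sigma> v) = ?g (\<tau> v)"
      using cyc\<sigma>(3) cyc\<tau>(3) unfolding M_def[symmetric] M[symmetric] by auto
    then show ?thesis using inj_onD[OF cyc\<sigma>(2)[folded M_def]] by blast
  next
    case False
    then show ?thesis using v M unfolding M_def by auto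
  qed
qed

lemma unicyclic_relabelling_swap:
  assumes "finite V" "r \<in> V" "a \<in> forest V {r}" "b \<in> V - {r}" "bij_betw \<sigma> V V"
    and good: "\<forall>u\<in>V. u \<in> \<sigma> ` {u, second_parent r (a, b) u}"
    and \<sigma>rb: "\<sigma> r = b" "\<sigma> b = r"
  shows "\<forall>u\<in>V - {r, b}. \<sigma> u = u"
proof -
  let ?g = "second_parent r (a, b)"
  have gV: "?g ` V \<subseteq> V" using second_parent_in[OF assms(3)] assms(4) by blast
  note cyc = moved_points_cycle[OF assms(1,5) gV good]
  define M where "M = {v \<in> V. \<sigma> v \<noteq> v}"
  have rbM: "r \<in> M" "b \<in> M" using \<sigma>rb assms(2,4) by (auto simp: M_def)
  have "?g b = r" using cyc(3) rbM(1) \<sigma>rb(1) by (auto simp: M_def)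
  have "a ` (M - {r, b}) \<subseteq> M - {r, b}"
  proof (rule image_subsetI)
    fix u assume "u \<in> M - {r, b}"
    then have u: "u \<in> M" "u \<noteq> r" "u \<noteq> b" by auto
    have "?g u \<in> M" using cyc(1) u(1) by (auto simp: M_def)
    moreover have "?g u \<noteq> ?g b" "?g u \<noteq> ?g r"
      using inj_onD[OF cyc(2)[folded M_def]] u rbM by blast+
    ultimately show "a u \<in> M - {r, b}"
      using u(2) \<open>?g b = r\<close> by (auto simp: second_parent_def)
  qed
  then have "M - {r, b} = {}"
    by (rule forest_closed_subset_empty[OF assms(3), rotated]) (auto simp: M_def)
  then show ?thesis by (auto simp: M_def)
qed

text \<open>For card V = 2 the transposition of r and b stabilises the assignment.\<close>
lemma unicyclic_assignment_rigid:
  assumes "finite V" "card V \<ge> 3" "r \<in> V" "a \<in> forest V {r}" "b \<in> V - {r}"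
    and \<sigma>: "bij_betw \<sigma> V V"
    and stab: "\<forall>u\<in>V. \<sigma> ` unicyclic_assignment V r (a, b) u = unicyclic_assignment V r (a, b) u"
  shows "\<forall>v\<in>V. \<sigma> v = v"
proof (rule ccontr)
  assume nontrivial: "\<not> (\<forall>v\<in>V. \<sigma> v = v)"
  let ?g = "second_parent r (a, b)"
  have level: "unicyclic_assignment V r (a, b) u = {u, ?g u}" if "u \<in> V" for u
    using that by (simp add: unicyclic_assignment_def)
  have inj: "inj_on \<sigma> V" using \<sigma> by (rule bij_betw_imp_inj_on)
  have good: "\<forall>u\<in>V. u \<in> \<sigma> ` {u, ?g u}" using stab level by auto
  have "\<forall>u\<in>V. u \<in> id ` {u, ?g u}" by simp
  then have "\<sigma> r \<noteq> r"
    using unicyclic_relabellings_agree[OF assms(1,4) _ \<sigma> good bij_betw_id] assms(5) nontrivial by auto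
  moreover have "\<sigma> ` {r, b} = {r, b}"
    using stab[rule_format, OF assms(3)] level[OF assms(3)] by (simp add: second_parent_def)
  ultimately have \<sigma>rb: "\<sigma> r = b" "\<sigma> b = r"
    using inj_onD[OF inj, of b r] assms(3,5) by auto
  note fixed = unicyclic_relabelling_swap[OF assms(1,3,4,5) \<sigma> good \<sigma>rb]
  \<comment> \<open>A vertex outside {r, b} is fixed, hence so is its parent, which therefore also lies
    outside {r, b}; this contradicts the acyclicity of a.\<close>
  have "a ` (V - {r, b}) \<subseteq> V - {r, b}"
  proof (rule image_subsetI)
    fix u assume "u \<in> V - {r, b}"
    then have u: "u \<in> V" "u \<noteq> r" "u \<noteq> b" by auto
    have au: "a u \<in> V" "a u \<noteq> u" using forestD[OF assms(4)] u by auto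
    have "\<sigma> ` {u, a u} = {u, a u}"
      using stab[rule_format, OF u(1)] level[OF u(1)] u(2) by (simp add: second_parent_def)
    moreover have "\<sigma> (a u) \<noteq> u"
      using inj_onD[OF inj, of "a u" u] fixed u au by auto
    ultimately have "\<sigma> (a u) = a u" by auto
    then show "a u \<in> V - {r, b}" using au \<sigma>rb assms(5) by auto
  qed
  then have "V - {r, b} = {}"
    by (rule forest_closed_subset_empty[OF assms(4), rotated]) auto
  moreover have "card (V - {r, b}) \<noteq> 0"
    using assms(2) card_Diff_subset[of "{r, b}" V] assms(1,3,5) by (auto simp: card_insert_if)
  ultimately show False by (metis card.empty)
qed

lemma unicyclic_relabellings_eq:
  assumes "finite V" "P \<in> unicyclic_assignments V r"
    and Q: "Q \<in> unicyclic_assignments V r" "bij_betw \<sigma> V V" "\<forall>u\<in>V. Q u = \<sigma> ` P u"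
    and Q': "Q' \<in> unicyclic_assignments V r" "bij_betw \<sigma>' V V" "\<forall>u\<in>V. Q' u = \<sigma>' ` P u"
    and "\<sigma> r = r \<longleftrightarrow> \<sigma>' r = r"
  shows "Q = Q'"
proof (rule extensionalityI[OF unicyclic_assignments_extensional[OF Q(1)] unicyclic_assignments_extensional[OF Q'(1)]])
  obtain a b where ab: "a \<in> forest V {r}" "b \<in> V - {r}" and P: "P = unicyclic_assignment V r (a, b)"
    using assms(2) by (rule unicyclic_assignmentsE)
  have good: "\<forall>u\<in>V. u \<in> \<rho> ` {u, second_parent r (a, b) u}"
    if "R \<in> unicyclic_assignments V r" "\<forall>u\<in>V. R u = \<rho> ` P u" for R \<rho>
    using unicyclic_assignmentsD(3)[OF that(1)] that(2) by (simp add: P unicyclic_assignment_def)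
  fix u assume u: "u \<in> V"
  have "\<forall>v\<in>V. \<sigma> v = \<sigma>' v"
    using unicyclic_relabellings_agree[OF assms(1) ab(1) _ Q(2) good[OF Q(1,3)] Q'(2) good[OF Q'(1,3)]]
      ab(2) assms(9) by blast
  then have "\<sigma> ` P u = \<sigma>' ` P u" using unicyclic_assignmentsD(1)[OF assms(2) u] by (intro image_cong) auto
  then show "Q u = Q' u" using Q(3) Q'(3) u by simp
qed

lemma card_relabel_class_le_2:
  assumes "finite V" "r \<in> V" "P \<in> unicyclic_assignments V r"
  shows "card {Q \<in> unicyclic_assignments V r. relabelled V P Q} \<le> 2"
proof -
  let ?C = "{Q \<in> unicyclic_assignments V r. relabelled V P Q}"
  \<comment> \<open>Every member other than P needs a relabelling that moves r, and all of these agree.\<close>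
  have "Q = Q'" if QQ': "Q \<in> ?C - {P}" "Q' \<in> ?C - {P}" for Q Q'
  proof -
    obtain \<sigma> where \<sigma>: "bij_betw \<sigma> V V" "\<forall>u\<in>V. Q u = \<sigma> ` P u"
      using QQ'(1) unfolding relabelled_def by blast
    obtain \<sigma>' where \<sigma>': "bij_betw \<sigma>' V V" "\<forall>u\<in>V. Q' u = \<sigma>' ` P u"
      using QQ'(2) unfolding relabelled_def by blast
    note eq = unicyclic_relabellings_eq[OF assms(1,3)]
    have id: "\<forall>u\<in>V. P u = id ` P u" by simp
    have "\<sigma> r \<noteq> r" "\<sigma>' r \<noteq> r"
      using eq[OF _ \<sigma> assms(3) bij_betw_id id] eq[OF _ \<sigma>' assms(3) bij_betw_id id] QQ' by auto
    then show "Q = Q'" using eq[OF _ \<sigma> _ \<sigma>'] QQ' by auto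
  qed
  moreover have "finite ?C" using finite_unicyclic_assignments[OF assms(1)] by simp
  ultimately have "card (?C - {P}) \<le> 1" by (simp add: card_le_Suc0_iff_eq)
  then show ?thesis using card_Diff_singleton_if[of ?C P] by (simp split: if_splits)
qed

section \<open>Pedigrees built from parent assignments\<close>

text \<open>P u is the set of parents, in the next generation, of the child u. The condition
  u \<in> P u gives every vertex of the next generation a child.\<close>
definition parent_assignment :: "nat \<Rightarrow> (nat \<Rightarrow> nat set) \<Rightarrow> bool" where
  "parent_assignment n P \<longleftrightarrow> (\<forall>u<n. P u \<subseteq> {..<n} \<and> card (P u) = 2 \<and> u \<in> P u)"

definition pedigree_of :: "nat \<Rightarrow> nat \<Rightarrow> (nat \<Rightarrow> nat \<Rightarrow> nat set) \<Rightarrow> ((nat \<times> nat) \<times> (nat \<times> nat)) set" where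
  "pedigree_of n d Ps = {((i, u), (Suc i, v)) | i u v. i < d \<and> u < n \<and> v \<in> Ps i u}"

lemma pedigree_of_iff:
  "((i, u), (j, v)) \<in> pedigree_of n d Ps \<longleftrightarrow> i < d \<and> u < n \<and> j = Suc i \<and> v \<in> Ps i u"
  by (auto simp: pedigree_of_def)

lemma pedV_iff: "(i, u) \<in> pedV n d \<longleftrightarrow> i \<le> d \<and> u < n"
  by (simp add: pedV_def)

lemma dgp_pedigree_of:
  assumes "d \<ge> 1" "\<forall>i<d. parent_assignment n (Ps i)"
  shows "dgp n d (pedigree_of n d Ps)"
proof -
  have P: "Ps i u \<subseteq> {..<n}" "card (Ps i u) = 2" "u \<in> Ps i u" if "i < d" "u < n" for i u
    using assms(2) that by (auto simp: parent_assignment_def)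
  have "pedigree_of n d Ps \<subseteq> pedV n d \<times> pedV n d"
    using P(1) by (fastforce simp: pedigree_of_def pedV_iff)
  moreover have "\<forall>(x, y)\<in>pedigree_of n d Ps. fst y = Suc (fst x)"
    by (auto simp: pedigree_of_def)
  moreover have "card {y. ((i, u), y) \<in> pedigree_of n d Ps} = 2" if "i < d" "u < n" for i u
  proof -
    have "{y. ((i, u), y) \<in> pedigree_of n d Ps} = Pair (Suc i) ` Ps i u"
      using that by (auto simp: pedigree_of_def)
    moreover have "card (Pair (Suc i) ` Ps i u) = card (Ps i u)"
      by (rule card_image) (auto intro: inj_onI)
    ultimately show ?thesis using P(2)[OF that] by simp
  qed
  moreover have "\<exists>y. ((i, u), y) \<in> pedigree_of n d Ps \<or> (y, (i, u)) \<in> pedigree_of n d Ps"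
    if "i \<le> d" "u < n" for i u
  proof (cases "i < d")
    case True
    then have "((i, u), (Suc i, u)) \<in> pedigree_of n d Ps" using P(3) that by (simp add: pedigree_of_iff)
    then show ?thesis by blast
  next
    case False
    then have "((d - 1, u), (i, u)) \<in> pedigree_of n d Ps"
      using P(3)[of "d - 1" u] assms(1) that by (simp add: pedigree_of_iff)
    then show ?thesis by blast
  qed
  ultimately show ?thesis unfolding dgp_def by (auto simp: pedV_def)
qed

lemma pedigree_of_parents:
  assumes "dgp n d E"
  shows "pedigree_of n d (\<lambda>i u. {v. ((i, u), (Suc i, v)) \<in> E}) = E"
proof
  show "pedigree_of n d (\<lambda>i u. {v. ((i, u), (Suc i, v)) \<in> E}) \<subseteq> E"
    by (auto simp: pedigree_of_def)
  show "E \<subseteq> pedigree_of n d (\<lambda>i u. {v. ((i, u), (Suc i, v)) \<in> E})"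
  proof clarify
    fix i u j v assume e: "((i, u), (j, v)) \<in> E"
    then have "(i, u) \<in> pedV n d" "(j, v) \<in> pedV n d" "j = Suc i"
      using assms unfolding dgp_def by auto
    then show "((i, u), (j, v)) \<in> pedigree_of n d (\<lambda>i u. {v. ((i, u), (Suc i, v)) \<in> E})"
      using e by (auto simp: pedigree_of_iff pedV_iff)
  qed
qed

lemma dgp_parents:
  assumes "dgp n d E" "i < d" "u < n"
  shows "{v. ((i, u), (Suc i, v)) \<in> E} \<subseteq> {..<n}" "card {v. ((i, u), (Suc i, v)) \<in> E} = 2"
proof -
  have "{y. ((i, u), y) \<in> E} = Pair (Suc i) ` {v. ((i, u), (Suc i, v)) \<in> E}"
    using assms(1) unfolding dgp_def by force
  moreover have "card {y. ((i, u), y) \<in> E} = 2"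
    using assms unfolding dgp_def by (auto simp: pedV_iff)
  moreover have "card (Pair (Suc i) ` {v. ((i, u), (Suc i, v)) \<in> E}) = card {v. ((i, u), (Suc i, v)) \<in> E}"
    by (rule card_image) (auto intro: inj_onI)
  ultimately show "card {v. ((i, u), (Suc i, v)) \<in> E} = 2" by simp
  show "{v. ((i, u), (Suc i, v)) \<in> E} \<subseteq> {..<n}"
    using assms(1) unfolding dgp_def by (auto simp: pedV_iff)
qed

lemma finite_dgp: "finite {E. dgp n d E}"
proof (rule finite_subset)
  show "{E. dgp n d E} \<subseteq> Pow (pedV n d \<times> pedV n d)" by (auto simp: dgp_def)
  have "pedV n d \<subseteq> {..d} \<times> {..<n}" by (auto simp: pedV_def)
  then show "finite (Pow (pedV n d \<times> pedV n d))" by (auto intro: finite_subset)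
qed

lemma card_dgp_le: "card {E. dgp n d E} \<le> (n choose 2) ^ (n * d)"
proof -
  define parents where
    "parents E = (\<lambda>(i, u) \<in> {..<d} \<times> {..<n}. {v. ((i, u), (Suc i, v)) \<in> E})"
    for E :: "((nat \<times> nat) \<times> (nat \<times> nat)) set"
  let ?B = "{..<d} \<times> {..<n} \<rightarrow>\<^sub>E {S. S \<subseteq> {..<n} \<and> card S = 2}"
  have "inj_on parents {E. dgp n d E}"
  proof (rule inj_onI)
    fix E E' assume "E \<in> {E. dgp n d E}" "E' \<in> {E. dgp n d E}" and eq: "parents E = parents E'"
    have "{v. ((i, u), (Suc i, v)) \<in> E} = {v. ((i, u), (Suc i, v)) \<in> E'}" if "i < d" "u < n" for i u
      using fun_cong[OF eq, of "(i, u)"] that by (simp add: parents_def)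
    then have "pedigree_of n d (\<lambda>i u. {v. ((i, u), (Suc i, v)) \<in> E})
             = pedigree_of n d (\<lambda>i u. {v. ((i, u), (Suc i, v)) \<in> E'})"
      unfolding pedigree_of_def by blast
    then show "E = E'" using pedigree_of_parents \<open>E \<in> _\<close> \<open>E' \<in> _\<close> by simp
  qed
  moreover have "parents ` {E. dgp n d E} \<subseteq> ?B"
    using dgp_parents by (fastforce simp: parents_def)
  moreover have "card ?B = (n choose 2) ^ (n * d)"
    by (simp add: card_PiE card_cartesian_product n_subsets mult.commute)
  ultimately show ?thesis
    using card_inj_on_le[of parents "{E. dgp n d E}" ?B] by (simp add: finite_PiE)
qed

lemma N_le_card_dgp: "N n d \<le> card {E. dgp n d E}"
proof -
  have "{E. dgp n d E} // ped_iso_rel n d = (\<lambda>E. ped_iso_rel n d `` {E}) ` {E. dgp n d E}"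
    unfolding quotient_def by blast
  then show ?thesis unfolding N_def using card_image_le[OF finite_dgp] by simp
qed

corollary N_le_choose_power: "N n d \<le> (n choose 2) ^ (n * d)"
  using N_le_card_dgp card_dgp_le by (rule le_trans)

definition rigid_family :: "nat \<Rightarrow> (nat \<Rightarrow> nat set) set \<Rightarrow> bool" where
  "rigid_family n S \<longleftrightarrow> (\<forall>P\<in>S. \<forall>P'\<in>S. \<forall>\<sigma>.
     bij_betw \<sigma> {..<n} {..<n} \<and> (\<forall>u<n. P' u = \<sigma> ` P u) \<longrightarrow> (\<forall>v<n. \<sigma> v = v))"

lemma ped_iso_next_generation:
  assumes f: "bij_betw f (pedV n d) (pedV n d)"
    and arcs: "\<forall>x\<in>pedV n d. \<forall>y\<in>pedV n d. (x, y) \<in> pedigree_of n d Ps \<longleftrightarrow> (f x, f y) \<in> pedigree_of n d Ps'"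
    and i: "i < d" "parent_assignment n (Ps i)"
    and fixed: "\<forall>u<n. f (i, u) = (i, u)"
  obtains \<sigma> where "bij_betw \<sigma> {..<n} {..<n}" "\<forall>v<n. f (Suc i, v) = (Suc i, \<sigma> v)"
proof -
  have V: "(i, v) \<in> pedV n d" "(Suc i, v) \<in> pedV n d" if "v < n" for v
    using i(1) that by (auto simp: pedV_iff)
  define \<sigma> where "\<sigma> v = snd (f (Suc i, v))" for v
  have f_Suc: "f (Suc i, v) = (Suc i, \<sigma> v)" "\<sigma> v < n" if "v < n" for v
  proof -
    have "((i, v), (Suc i, v)) \<in> pedigree_of n d Ps"
      using i that by (simp add: pedigree_of_iff parent_assignment_def)
    then have "(f (i, v), f (Suc i, v)) \<in> pedigree_of n d Ps'" using arcs V[OF that] by blast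
    then have "((i, v), f (Suc i, v)) \<in> pedigree_of n d Ps'" using fixed that by simp
    then have "fst (f (Suc i, v)) = Suc i" by (cases "f (Suc i, v)") (simp add: pedigree_of_iff)
    then show "f (Suc i, v) = (Suc i, \<sigma> v)" by (simp add: \<sigma>_def prod_eq_iff)
    show "\<sigma> v < n"
      using bij_betw_apply[OF f V(2)[OF that]] by (cases "f (Suc i, v)") (simp add: \<sigma>_def pedV_iff)
  qed
  have "inj_on \<sigma> {..<n}"
  proof (rule inj_onI)
    fix v w assume "v \<in> {..<n}" "w \<in> {..<n}" "\<sigma> v = \<sigma> w"
    then have "f (Suc i, v) = f (Suc i, w)" using f_Suc by simp
    then show "v = w" using inj_onD[OF bij_betw_imp_inj_on[OF f]] V(2) \<open>v \<in> _\<close> \<open>w \<in> _\<close> by blast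
  qed
  moreover have "\<sigma> ` {..<n} \<subseteq> {..<n}" using f_Suc(2) by blast
  ultimately have "bij_betw \<sigma> {..<n} {..<n}" by (simp add: bij_betw_def endo_inj_surj)
  then show ?thesis using that f_Suc(1) by blast
qed

lemma ped_iso_relabels_parents:
  assumes arcs: "\<forall>x\<in>pedV n d. \<forall>y\<in>pedV n d. (x, y) \<in> pedigree_of n d Ps \<longleftrightarrow> (f x, f y) \<in> pedigree_of n d Ps'"
    and i: "i < d" "parent_assignment n (Ps i)" "parent_assignment n (Ps' i)"
    and fixed: "\<forall>u<n. f (i, u) = (i, u)"
    and \<sigma>: "bij_betw \<sigma> {..<n} {..<n}" "\<forall>v<n. f (Suc i, v) = (Suc i, \<sigma> v)"
    and u: "u < n"
  shows "Ps' i u = \<sigma> ` Ps i u"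
proof -
  have arc: "v \<in> Ps i u \<longleftrightarrow> \<sigma> v \<in> Ps' i u" if "v < n" for v
    using arcs[rule_format, of "(i, u)" "(Suc i, v)"] fixed \<sigma>(2) i(1) u that
    by (simp add: pedigree_of_iff pedV_iff)
  have sub: "Ps i u \<subseteq> {..<n}" "Ps' i u \<subseteq> {..<n}" using i(2,3) u by (auto simp: parent_assignment_def)
  show ?thesis
  proof
    show "\<sigma> ` Ps i u \<subseteq> Ps' i u" using arc sub(1) by blast
    show "Ps' i u \<subseteq> \<sigma> ` Ps i u"
    proof
      fix w assume w: "w \<in> Ps' i u"
      then obtain v where "v < n" "w = \<sigma> v" using sub(2) bij_betw_imp_surj_on[OF \<sigma>(1)] by blast
      then show "w \<in> \<sigma> ` Ps i u" using arc w by blast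
    qed
  qed
qed

lemma ped_iso_pedigree_of_eq:
  assumes rigid: "rigid_family n S"
    and S: "\<forall>P\<in>S. parent_assignment n P"
    and Ps: "\<forall>i<d. Ps i \<in> S" "\<forall>i<d. Ps' i \<in> S"
    and iso: "ped_iso n d (pedigree_of n d Ps) (pedigree_of n d Ps')"
  shows "\<forall>i<d. \<forall>u<n. Ps i u = Ps' i u"
proof -
  obtain f where f: "bij_betw f (pedV n d) (pedV n d)" "\<forall>j<n. f (0, j) = (0, j)"
    and arcs: "\<forall>x\<in>pedV n d. \<forall>y\<in>pedV n d. (x, y) \<in> pedigree_of n d Ps \<longleftrightarrow> (f x, f y) \<in> pedigree_of n d Ps'"
    using iso unfolding ped_iso_def by blast
  \<comment> \<open>Once f fixes generation i, rigidity forces it to fix generation i + 1 as well.\<close>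
  have step: "(\<forall>u<n. Ps i u = Ps' i u) \<and> (\<forall>v<n. f (Suc i, v) = (Suc i, v))"
    if i: "i < d" and fixed_i: "\<forall>u<n. f (i, u) = (i, u)" for i
  proof -
    obtain \<sigma> where \<sigma>: "bij_betw \<sigma> {..<n} {..<n}" "\<forall>v<n. f (Suc i, v) = (Suc i, \<sigma> v)"
      using ped_iso_next_generation[OF f(1) arcs i _ fixed_i] S Ps i by blast
    have rel: "\<forall>u<n. Ps' i u = \<sigma> ` Ps i u"
      using ped_iso_relabels_parents[OF arcs i _ _ fixed_i \<sigma>] S Ps i by blast
    have id: "\<forall>v<n. \<sigma> v = v" using rigid \<sigma>(1) rel Ps i unfolding rigid_family_def by blast
    have "\<sigma> ` Ps i u = Ps i u" if "u < n" for u
    proof -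
      have "Ps i u \<subseteq> {..<n}" using S Ps i that by (auto simp: parent_assignment_def)
      then have "\<sigma> ` Ps i u = id ` Ps i u" using id by (intro image_cong) auto
      then show ?thesis by simp
    qed
    then show ?thesis using \<sigma>(2) rel id by simp
  qed
  have fixed: "\<forall>u<n. f (i, u) = (i, u)" if "i \<le> d" for i
    using that
  proof (induction i)
    case 0
    then show ?case using f(2) by blast
  next
    case (Suc i)
    then show ?case using step[of i] by simp
  qed
  show ?thesis using step fixed by simp
qed

section \<open>The lower bound\<close>

definition assignment_reps :: "nat \<Rightarrow> (nat \<Rightarrow> nat set) set" where
  "assignment_reps n = class_reps (unicyclic_assignments {..<n} (n - 1))
                    (relabel_rel {..<n} (unicyclic_assignments {..<n} (n - 1)))"

lemma assignment_reps_subset: "assignment_reps n \<subseteq> unicyclic_assignments {..<n} (n - 1)"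
  unfolding assignment_reps_def by (rule class_reps_subset[OF equiv_relabel_unicyclic_assignments])

lemma card_assignment_reps:
  assumes "n \<ge> 2"
  shows "(n - 1) * n ^ (n - 2) \<le> 2 * card (assignment_reps n)"
proof -
  let ?L = "unicyclic_assignments {..<n} (n - 1)"
  have "\<forall>P\<in>?L. card (relabel_rel {..<n} ?L `` {P}) \<le> 2"
  proof
    fix P assume P: "P \<in> ?L"
    then have "relabel_rel {..<n} ?L `` {P} = {Q \<in> ?L. relabelled {..<n} P Q}"
      by (auto simp: relabel_rel_def)
    then show "card (relabel_rel {..<n} ?L `` {P}) \<le> 2"
      using card_relabel_class_le_2[of "{..<n}" "n - 1" P] P assms by simp
  qed
  then have "card ?L \<le> 2 * card (?L // relabel_rel {..<n} ?L)"
    by (rule card_le_mult_card_quotient[OF equiv_relabel_unicyclic_assignments])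
  moreover have "card ?L = n ^ (n - 2) * (n - 1)"
    using card_unicyclic_assignments[of "{..<n}" "n - 1"] assms by simp
  moreover have "card (assignment_reps n) = card (?L // relabel_rel {..<n} ?L)"
    unfolding assignment_reps_def by (rule card_class_reps[OF equiv_relabel_unicyclic_assignments])
  ultimately show ?thesis by (simp add: mult.commute)
qed

lemma rigid_family_assignment_reps:
  assumes "n \<ge> 3"
  shows "rigid_family n (assignment_reps n)"
  unfolding rigid_family_def
proof (intro ballI allI impI, elim conjE)
  fix P P' \<sigma> v assume "P \<in> assignment_reps n" "P' \<in> assignment_reps n" "bij_betw \<sigma> {..<n} {..<n}"
    and "\<forall>u<n. P' u = \<sigma> ` P u" and v: "v < n"
  note assms = assms this
  let ?L = "unicyclic_assignments {..<n} (n - 1)"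
  have L: "P \<in> ?L" "P' \<in> ?L"
    using assms(2,3) assignment_reps_subset by auto
  then have "(P, P') \<in> relabel_rel {..<n} ?L"
    using assms(4,5) by (auto simp: relabel_rel_def relabelled_def)
  then have "P = P'"
    by (rule class_reps_unique[OF equiv_relabel_unicyclic_assignments assms(2,3)[unfolded assignment_reps_def]])
  obtain a b where ab: "a \<in> forest {..<n} {n - 1}" "b \<in> {..<n} - {n - 1}"
    and P: "P = unicyclic_assignment {..<n} (n - 1) (a, b)"
    using L(1) by (rule unicyclic_assignmentsE)
  have "\<forall>u\<in>{..<n}. \<sigma> ` P u = P u" using assms(5) \<open>P = P'\<close> by simp
  then show "\<sigma> v = v"
    using unicyclic_assignment_rigid[of "{..<n}" "n - 1" a b \<sigma>] ab assms(1,4) P v by simp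
qed

lemma assignment_repsD:
  assumes "n \<ge> 2" "P \<in> assignment_reps n"
  shows "parent_assignment n P" "P \<in> extensional {..<n}"
proof -
  have L: "P \<in> unicyclic_assignments {..<n} (n - 1)"
    using assms(2) assignment_reps_subset by blast
  show "parent_assignment n P" by (simp add: parent_assignment_def unicyclic_assignmentsD[OF L])
  show "P \<in> extensional {..<n}" by (rule unicyclic_assignments_extensional[OF L])
qed

lemma ped_iso_assignment_reps_eq:
  assumes "n \<ge> 3" "Ps \<in> {..<d} \<rightarrow>\<^sub>E assignment_reps n" "Ps' \<in> {..<d} \<rightarrow>\<^sub>E assignment_reps n"
    and iso: "ped_iso n d (pedigree_of n d Ps) (pedigree_of n d Ps')"
  shows "Ps = Ps'"
proof (rule PiE_ext[OF assms(2,3)])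
  fix i assume i: "i \<in> {..<d}"
  have "n \<ge> 2" using assms(1) by simp
  note reps = assignment_repsD[OF this]
  have "\<forall>i<d. Ps i \<in> assignment_reps n" "\<forall>i<d. Ps' i \<in> assignment_reps n" using assms(2,3) by auto
  then have "\<forall>i<d. \<forall>u<n. Ps i u = Ps' i u"
    using reps(1) by (intro ped_iso_pedigree_of_eq[OF rigid_family_assignment_reps[OF assms(1)] _ _ _ iso]) auto
  moreover have "Ps i \<in> assignment_reps n" "Ps' i \<in> assignment_reps n" using assms(2,3) i by auto
  ultimately show "Ps i = Ps' i" using i by (intro extensionalityI[OF reps(2) reps(2)]) auto
qed

lemma card_assignment_reps_power_le_N:
  assumes "n \<ge> 3" "d \<ge> 1"
  shows "card (assignment_reps n) ^ d \<le> N n d"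
proof -
  let ?X = "{..<d} \<rightarrow>\<^sub>E assignment_reps n"
  let ?cls = "\<lambda>Ps. ped_iso_rel n d `` {pedigree_of n d Ps}"
  have dgp: "dgp n d (pedigree_of n d Ps)" if "Ps \<in> ?X" for Ps
    using assignment_repsD(1)[of n] assms that
    by (intro dgp_pedigree_of[OF assms(2)]) auto
  have "inj_on ?cls ?X"
  proof (rule inj_onI)
    fix Ps Ps' assume Ps: "Ps \<in> ?X" and Ps': "Ps' \<in> ?X" and eq: "?cls Ps = ?cls Ps'"
    have "ped_iso n d (pedigree_of n d Ps') (pedigree_of n d Ps')"
      unfolding ped_iso_def by (rule exI[of _ id]) simp
    then have "pedigree_of n d Ps' \<in> ?cls Ps" using eq dgp[OF Ps'] by (simp add: ped_iso_rel_def)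
    then have "ped_iso n d (pedigree_of n d Ps) (pedigree_of n d Ps')" by (simp add: ped_iso_rel_def)
    then show "Ps = Ps'" by (rule ped_iso_assignment_reps_eq[OF assms(1) Ps Ps'])
  qed
  moreover have "?cls ` ?X \<subseteq> {E. dgp n d E} // ped_iso_rel n d"
    using dgp by (auto intro: quotientI)
  moreover have "finite ({E. dgp n d E} // ped_iso_rel n d)"
    by (rule finite_quotient[OF finite_dgp]) (auto simp: ped_iso_rel_def)
  ultimately have "card ?X \<le> N n d"
    unfolding N_def by (metis card_image card_mono)
  then show ?thesis by (simp add: card_PiE)
qed

lemma N_pos:
  assumes "n \<ge> 2" "d \<ge> 1"
  shows "N n d \<ge> 1"
proof -
  have "(n - 1) * n ^ (n - 2) > 0" using assms(1) by simp
  then have "card (assignment_reps n) \<noteq> 0" using card_assignment_reps[OF assms(1)] by linarith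
  then obtain P where "P \<in> assignment_reps n" by fastforce
  then have "dgp n d (pedigree_of n d (\<lambda>_. P))"
    using assignment_repsD(1)[OF assms(1)] by (intro dgp_pedigree_of[OF assms(2)]) simp
  then have "{E. dgp n d E} // ped_iso_rel n d \<noteq> {}" by (auto simp: quotient_def)
  moreover have "finite ({E. dgp n d E} // ped_iso_rel n d)"
    by (rule finite_quotient[OF finite_dgp]) (auto simp: ped_iso_rel_def)
  ultimately show ?thesis unfolding N_def by (simp add: Suc_le_eq card_gt_0_iff)
qed

lemma N_lower_bound:
  assumes "n \<ge> 2" "d \<ge> 1"
  shows "((real (n - 1) * real n ^ (n - 2)) / 2) ^ d \<le> real (N n d)"
proof (cases "n = 2")
  case True
  \<comment> \<open>Here the assignments are not rigid, but the bound is below 1.\<close>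
  have "((real (n - 1) * real n ^ (n - 2)) / 2) ^ d = (1 / 2) ^ d" using True by simp
  also have "\<dots> \<le> 1" by (simp add: power_le_one)
  also have "\<dots> \<le> real (N n d)" using N_pos assms by simp
  finally show ?thesis .
next
  case False
  have "real (n - 1) * real n ^ (n - 2) \<le> 2 * real (card (assignment_reps n))"
    using card_assignment_reps[OF assms(1)] by (simp flip: of_nat_power of_nat_mult)
  then have "((real (n - 1) * real n ^ (n - 2)) / 2) ^ d \<le> real (card (assignment_reps n)) ^ d"
    by (intro power_mono) auto
  also have "\<dots> \<le> real (N n d)"
    using card_assignment_reps_power_le_N[of n d] False assms by (simp flip: of_nat_power)
  finally show ?thesis .
qed

theorem mainTheorem7:
  fixes n d :: nat
  assumes "n \<ge> 2" and "d \<ge> 1"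
  shows "((real (n - 1) * real n ^ (n - 2)) / 2) ^ d \<le> real (N n d)
         \<and> real (N n d) \<le> real (n choose 2) ^ (n * d)"
proof
  show "((real (n - 1) * real n ^ (n - 2)) / 2) ^ d \<le> real (N n d)"
    using N_lower_bound[OF assms] .
  show "real (N n d) \<le> real (n choose 2) ^ (n * d)"
    using N_le_choose_power[of n d] by (simp flip: of_nat_power)
qed

end
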